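(* Let $\mathfrak X$ be a separable Banach space and let $(\Omega,\mathcal F,\mu)$ be a measure space with $\mu$ a positive finite measure. Let $X:\Omega\to\mathcal K(\mathfrak X)$ be an integrably bounded random closed set, and let $a\in\mathfrak X$. Then \[ \int_\Omega X\,d\mu=\{a\} \] holds if and only if there exists $x\in L^1[\Omega;\mathfrak X]$ such that $X(\omega)=\{x(\omega)\}$ for $\mu$-a.e. $\omega$ and $\int_\Omega x\,d\mu=a$.
   Context: $\mathcal K(\mathfrak X)$ denotes the nonempty closed subsets of $\mathfrak X$. A random closed set $X$ is an (Effros-)measurable map $\Omega\to\mathcal K(\mathfrak X)$. It is integrably bounded, written $X\in L^1[\Omega;\mathcal K(\mathfrak X)]$, if $\omega\mapsto\sup\{\|y\|:y\in X(\omega)\}$ is $\mu$-integrable. $S_X$ denotes the set of integrable selections of $X$, i.e. those $x\in L^1[\Omega;\mathfrak X]$ with $x(\omega)\in X(\omega)$ for $\mu$-a.e. $\omega$. The Aumann integral is $\int_\Omega X\,d\mu=\{\int_\Omega x\,d\mu : x\in S_X\}$, where the integrals are Bochner integrals. *)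

theory Defs
  imports "HOL-Analysis.Analysis"
begin

definition effros_measurable :: "'a measure \<Rightarrow> ('a \<Rightarrow> 'b::topological_space set) \<Rightarrow> bool" where
  "effros_measurable M X \<longleftrightarrow> (\<forall>U. open U \<longrightarrow> {\<omega>\<in>space M. X \<omega> \<inter> U \<noteq> {}} \<in> sets M)"

definition random_closed_set :: "'a measure \<Rightarrow> ('a \<Rightarrow> 'b::topological_space set) \<Rightarrow> bool" where
  "random_closed_set M X \<longleftrightarrow>
     (\<forall>\<omega>\<in>space M. X \<omega> \<noteq> {} \<and> closed (X \<omega>)) \<and> effros_measurable M X"

definition integrably_bounded :: "'a measure \<Rightarrow> ('a \<Rightarrow> 'b::real_normed_vector set) \<Rightarrow> bool" where
  "integrably_bounded M X \<longleftrightarrow>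
     (\<lambda>\<omega>. SUP y\<in>X \<omega>. ennreal (norm y)) \<in> borel_measurable M \<and>
     (\<integral>\<^sup>+\<omega>. (SUP y\<in>X \<omega>. ennreal (norm y)) \<partial>M) < \<infinity>"

definition integrable_selections ::
  "'a measure \<Rightarrow> ('a \<Rightarrow> 'b::{banach, second_countable_topology} set) \<Rightarrow> ('a \<Rightarrow> 'b) set" where
  "integrable_selections M X = {x. integrable M x \<and> (AE \<omega> in M. x \<omega> \<in> X \<omega>)}"

definition aumann_integral ::
  "'a measure \<Rightarrow> ('a \<Rightarrow> 'b::{banach, second_countable_topology} set) \<Rightarrow> 'b set" where
  "aumann_integral M X = (\<lambda>x. integral\<^sup>L M x) ` integrable_selections M X"

end

theory Submission
  imports Defs
begin

text \<open>
  If the Aumann integral of X is the singleton {a}, all integrable selections of X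
  must agree almost everywhere: gluing two selections g and x along an arbitrary
  measurable set A gives another selection, so the integral of g - x over every A
  vanishes, which forces g = x a.e. since the (finite) measure is sigma-finite.  On the other hand, a Kuratowski--Ryll-Nardzewski type construction
  produces, for every ball B(d k, r) around a point of a dense sequence, a measurable
  selection that lies within 3r of d k wherever X meets that ball.  Such a selection
  must coincide a.e. with a fixed selection x, so a.e. X never meets a small ball far
  from x; by separability this forces X = {x} a.e.  The converse direction is
  immediate, since then every integrable selection equals x a.e.
\<close>

lemma dense_sequence_exists:
  obtains d :: "nat \<Rightarrow> 'b::{metric_space, second_countable_topology}"
  where "\<And>y r. 0 < r \<Longrightarrow> \<exists>k. dist (d k) y < r"
proof -
  obtain D :: "'b set" where D: "countable D" "\<And>U. open U \<Longrightarrow> U \<noteq> {} \<Longrightarrow> \<exists>d\<in>D. d \<in> U"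
    by (erule countable_dense_setE)
  have "\<exists>k. dist (from_nat_into D k) y < r" if "0 < r" for y r
  proof -
    obtain z where z: "z \<in> D" "z \<in> ball y r" using D(2)[of "ball y r"] \<open>0 < r\<close> by auto
    have "from_nat_into D (to_nat_on D z) = z" using D(1) z(1) by simp
    then show ?thesis using z(2) by (metis dist_commute mem_ball)
  qed
  then show ?thesis by (rule that)
qed

lemma effros_hit_measurable:
  assumes "effros_measurable M X" and "open U"
  shows "(\<lambda>\<omega>. X \<omega> \<inter> U \<noteq> {}) \<in> M \<rightarrow>\<^sub>M count_space UNIV"
  using assms unfolding effros_measurable_def pred_def by simp

lemma geometric_steps_convergent:
  fixes s :: "nat \<Rightarrow> 'b::complete_space"
  assumes step: "\<And>n. dist (s (Suc n)) (s n) \<le> c / 2 ^ Suc n"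
  shows "convergent s" and "dist (lim s) (s 0) \<le> c"
proof -
  have tail: "dist (s (n + k)) (s n) \<le> c / 2 ^ n - c / 2 ^ (n + k)" for n k
  proof (induction k)
    case (Suc k)
    have "dist (s (n + Suc k)) (s n) \<le> dist (s (Suc (n + k))) (s (n + k)) + dist (s (n + k)) (s n)"
      by (simp add: dist_triangle)
    also have "\<dots> \<le> c / 2 ^ Suc (n + k) + (c / 2 ^ n - c / 2 ^ (n + k))"
      using step[of "n + k"] Suc by linarith
    also have "\<dots> = c / 2 ^ n - c / 2 ^ (n + Suc k)" by (simp add: field_simps)
    finally show ?case .
  qed simp
  have "0 \<le> c" using order_trans[OF zero_le_dist step[of 0]] by simp
  then have close: "dist (s m) (s n) \<le> c / 2 ^ n" if "n \<le> m" for m n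
  proof -
    have "0 \<le> c / 2 ^ m" using \<open>0 \<le> c\<close> by simp
    then show ?thesis using tail[of n "m - n"] that by simp
  qed
  have "Cauchy s"
  proof (rule metric_CauchyI)
    fix r :: real assume "0 < r"
    obtain N where "2 * c / r < 2 ^ N" using real_arch_pow[of 2 "2 * c / r"] by auto
    then have N: "2 * (c / 2 ^ N) < r" using \<open>0 < r\<close> by (simp add: field_simps)
    have "dist (s m) (s n) < r" if "N \<le> m" "N \<le> n" for m n
      using dist_triangle2[of "s m" "s n" "s N"] close[OF that(1)] close[OF that(2)] N by linarith
    then show "\<exists>N. \<forall>m\<ge>N. \<forall>n\<ge>N. dist (s m) (s n) < r" by blast
  qed
  then show conv: "convergent s" by (simp add: Cauchy_convergent_iff)
  have "dist (s 0) (lim s) \<le> c"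
    by (rule Lim_dist_ubound[OF _ conv[unfolded convergent_LIMSEQ_iff]])
      (use close[of 0] in \<open>auto simp: dist_commute\<close>)
  then show "dist (lim s) (s 0) \<le> c" by (simp add: dist_commute)
qed

lemma closed_contains_approximated_limit:
  fixes S :: "'b::real_normed_vector set"
  assumes "closed S" and lim: "s \<longlonglongrightarrow> l" and eps: "\<epsilon> \<longlonglongrightarrow> 0"
    and near: "\<And>n. \<exists>y\<in>S. dist y (s n) < \<epsilon> n"
  shows "l \<in> S"
proof -
  obtain y where y: "\<And>n. y n \<in> S" "\<And>n. dist (y n) (s n) < \<epsilon> n" using near by metis
  have "(\<lambda>n. y n - s n) \<longlonglongrightarrow> 0"
    by (rule Lim_null_comparison[OF _ eps]) (use y(2) in \<open>auto simp: dist_norm less_imp_le\<close>)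
  from tendsto_add[OF this lim] have "y \<longlonglongrightarrow> l" by simp
  then show ?thesis using \<open>closed S\<close> y(1) unfolding closed_sequential_limits by blast
qed

text \<open>The refinement step of the Kuratowski--Ryll-Nardzewski construction: measurably
  choose dense-sequence indices F n such that X meets B(d (F n), e/2^n) and consecutive
  centres are at most 3e/2^(n+1) apart.\<close>
lemma refining_index_sequence:
  fixes X :: "'a \<Rightarrow> 'b::metric_space set" and d :: "nat \<Rightarrow> 'b"
  assumes dense: "\<And>y r. 0 < r \<Longrightarrow> \<exists>k. dist (d k) y < r"
    and eff: "effros_measurable M X"
    and f0: "f0 \<in> M \<rightarrow>\<^sub>M count_space UNIV" and "0 < e"
    and start: "\<And>\<omega>. \<omega> \<in> space M \<Longrightarrow> X \<omega> \<inter> ball (d (f0 \<omega>)) e \<noteq> {}"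
  obtains F where "F 0 = f0" and "\<And>n. F n \<in> M \<rightarrow>\<^sub>M count_space UNIV"
    and "\<And>n \<omega>. \<omega> \<in> space M \<Longrightarrow> X \<omega> \<inter> ball (d (F n \<omega>)) (e / 2 ^ n) \<noteq> {}"
    and "\<And>n \<omega>. \<omega> \<in> space M \<Longrightarrow> dist (d (F (Suc n) \<omega>)) (d (F n \<omega>)) \<le> 3 * e / 2 ^ Suc n"
proof -
  define hit where "hit n j \<omega> k \<longleftrightarrow> X \<omega> \<inter> ball (d k) (e / 2 ^ Suc n) \<inter> ball (d j) (e / 2 ^ n) \<noteq> {}"
    for n j \<omega> k
  define F where "F = rec_nat f0 (\<lambda>n h \<omega>. LEAST k. hit n (h \<omega>) \<omega> k)"
  have F0: "F 0 = f0" and FS: "F (Suc n) = (\<lambda>\<omega>. LEAST k. hit n (F n \<omega>) \<omega> k)" for n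
    by (simp_all add: F_def)
  text \<open>If X meets the current ball, some finer ball around a dense point meets both.\<close>
  have refine: "hit n j \<omega> (F (Suc n) \<omega>)"
    if meets_j: "X \<omega> \<inter> ball (d j) (e / 2 ^ n) \<noteq> {}" and j: "j = F n \<omega>" for n j \<omega>
  proof -
    obtain y where y: "y \<in> X \<omega>" "y \<in> ball (d j) (e / 2 ^ n)" using meets_j by blast
    obtain k where "dist (d k) y < e / 2 ^ Suc n" using dense[of "e / 2 ^ Suc n"] \<open>0 < e\<close> by auto
    then have "hit n j \<omega> k" using y unfolding hit_def by auto
    from LeastI[of "hit n j \<omega>", OF this] show ?thesis using j by (simp add: FS)
  qed
  have meets: "X \<omega> \<inter> ball (d (F n \<omega>)) (e / 2 ^ n) \<noteq> {}" if "\<omega> \<in> space M" for n \<omega>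
    by (induction n) (use start[OF that] refine in \<open>auto simp: F0 hit_def\<close>)
  have "dist (d (F (Suc n) \<omega>)) (d (F n \<omega>)) \<le> 3 * e / 2 ^ Suc n" if \<omega>: "\<omega> \<in> space M" for n \<omega>
  proof -
    obtain z where z: "z \<in> ball (d (F (Suc n) \<omega>)) (e / 2 ^ Suc n)" "z \<in> ball (d (F n \<omega>)) (e / 2 ^ n)"
      using refine[OF meets[OF \<omega>] refl] unfolding hit_def by blast
    have "dist (d (F (Suc n) \<omega>)) (d (F n \<omega>)) \<le> e / 2 ^ Suc n + e / 2 ^ n"
      using dist_triangle[of "d (F (Suc n) \<omega>)" "d (F n \<omega>)" z] z by (simp add: dist_commute)
    then show ?thesis by (simp add: field_simps)
  qed
  moreover have "F n \<in> M \<rightarrow>\<^sub>M count_space UNIV" for n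
  proof (induction n)
    case (Suc n)
    have "(\<lambda>\<omega>. hit n j \<omega> k) \<in> M \<rightarrow>\<^sub>M count_space UNIV" for j k
      unfolding hit_def Int_assoc by (intro effros_hit_measurable[OF eff]) auto
    then have "(\<lambda>\<omega>. hit n (F n \<omega>) \<omega> k) \<in> M \<rightarrow>\<^sub>M count_space UNIV" for k
      by (rule measurable_compose_countable[OF _ Suc])
    then show ?case unfolding FS by (rule measurable_Least)
  qed (simp add: F0 f0)
  ultimately show ?thesis using that F0 meets by blast
qed

lemma measurable_selection_near_start:
  fixes X :: "'a \<Rightarrow> 'b::banach set" and d :: "nat \<Rightarrow> 'b"
  assumes dense: "\<And>y r. 0 < r \<Longrightarrow> \<exists>k. dist (d k) y < r"
    and closed: "\<And>\<omega>. \<omega> \<in> space M \<Longrightarrow> closed (X \<omega>)"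
    and eff: "effros_measurable M X"
    and f0: "f0 \<in> M \<rightarrow>\<^sub>M count_space UNIV" and e: "0 < e"
    and start: "\<And>\<omega>. \<omega> \<in> space M \<Longrightarrow> X \<omega> \<inter> ball (d (f0 \<omega>)) e \<noteq> {}"
  shows "\<exists>g \<in> borel_measurable M. \<forall>\<omega>\<in>space M. g \<omega> \<in> X \<omega> \<and> dist (g \<omega>) (d (f0 \<omega>)) \<le> 3 * e"
proof -
  obtain F where F0: "F 0 = f0" and Fm: "\<And>n. F n \<in> M \<rightarrow>\<^sub>M count_space UNIV"
    and meets: "\<And>n \<omega>. \<omega> \<in> space M \<Longrightarrow> X \<omega> \<inter> ball (d (F n \<omega>)) (e / 2 ^ n) \<noteq> {}"
    and step: "\<And>n \<omega>. \<omega> \<in> space M \<Longrightarrow> dist (d (F (Suc n) \<omega>)) (d (F n \<omega>)) \<le> 3 * e / 2 ^ Suc n"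
    using refining_index_sequence[OF dense eff f0 e start] by blast
  define g where "g \<omega> = lim (\<lambda>n. d (F n \<omega>))" for \<omega>
  have lim: "(\<lambda>n. d (F n \<omega>)) \<longlonglongrightarrow> g \<omega>" and near: "dist (g \<omega>) (d (f0 \<omega>)) \<le> 3 * e"
    if "\<omega> \<in> space M" for \<omega>
    using geometric_steps_convergent[OF step[OF that]]
    by (simp_all add: g_def F0 convergent_LIMSEQ_iff)
  have "g \<in> borel_measurable M"
    by (rule borel_measurable_LIMSEQ_metric[OF _ lim])
      (rule measurable_compose_countable[OF _ Fm], simp)
  moreover have "g \<omega> \<in> X \<omega>" if "\<omega> \<in> space M" for \<omega>
  proof (rule closed_contains_approximated_limit[OF closed[OF that] lim[OF that]])
    show "(\<lambda>n. e / 2 ^ n) \<longlonglongrightarrow> 0" by (rule LIMSEQ_divide_realpow_zero) simp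
    show "\<exists>y\<in>X \<omega>. dist y (d (F n \<omega>)) < e / 2 ^ n" for n
      using meets[OF that, of n] by (auto simp: dist_commute)
  qed
  ultimately show ?thesis using near by blast
qed

lemma integrable_selection_of_bounded:
  fixes X :: "'a \<Rightarrow> 'b::{banach, second_countable_topology} set"
  assumes ib: "integrably_bounded M X" and gm: "g \<in> borel_measurable M"
    and sel: "\<And>\<omega>. \<omega> \<in> space M \<Longrightarrow> g \<omega> \<in> X \<omega>"
  shows "integrable M g"
proof (rule integrableI_bounded[OF gm])
  have "(\<integral>\<^sup>+\<omega>. ennreal (norm (g \<omega>)) \<partial>M) \<le> (\<integral>\<^sup>+\<omega>. (SUP y\<in>X \<omega>. ennreal (norm y)) \<partial>M)"
    by (rule nn_integral_mono) (auto intro: SUP_upper sel)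
  also have "\<dots> < \<infinity>" using ib unfolding integrably_bounded_def by simp
  finally show "(\<integral>\<^sup>+\<omega>. ennreal (norm (g \<omega>)) \<partial>M) < \<infinity>" .
qed

lemma localized_integrable_selection:
  fixes X :: "'a \<Rightarrow> 'b::{banach, second_countable_topology} set" and d :: "nat \<Rightarrow> 'b"
  assumes X: "random_closed_set M X" and ib: "integrably_bounded M X"
    and dense: "\<And>y r. 0 < r \<Longrightarrow> \<exists>k. dist (d k) y < r"
    and A: "A \<in> sets M" and r: "0 < r" and hit: "\<And>\<omega>. \<omega> \<in> A \<Longrightarrow> X \<omega> \<inter> ball (d k) r \<noteq> {}"
  obtains g where "integrable M g" and "\<And>\<omega>. \<omega> \<in> space M \<Longrightarrow> g \<omega> \<in> X \<omega>"
    and "\<And>\<omega>. \<omega> \<in> A \<Longrightarrow> dist (g \<omega>) (d k) \<le> 3 * r"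
proof -
  have ne: "\<And>\<omega>. \<omega> \<in> space M \<Longrightarrow> X \<omega> \<noteq> {}" and closed: "\<And>\<omega>. \<omega> \<in> space M \<Longrightarrow> closed (X \<omega>)"
    and eff: "effros_measurable M X"
    using X unfolding random_closed_set_def by auto
  define f0 where "f0 \<omega> = (if \<omega> \<in> A then k else LEAST j. X \<omega> \<inter> ball (d j) r \<noteq> {})" for \<omega>
  have "(\<lambda>\<omega>. X \<omega> \<inter> ball (d j) r \<noteq> {}) \<in> M \<rightarrow>\<^sub>M count_space UNIV" for j
    by (rule effros_hit_measurable[OF eff]) simp
  then have f0m: "f0 \<in> M \<rightarrow>\<^sub>M count_space UNIV" unfolding f0_def
    by (intro measurable_If_set measurable_Least) (auto simp: A sets.Int_space_eq2)
  have start: "X \<omega> \<inter> ball (d (f0 \<omega>)) r \<noteq> {}" if \<omega>: "\<omega> \<in> space M" for \<omega>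
  proof (cases "\<omega> \<in> A")
    case False
    obtain y where y: "y \<in> X \<omega>" using ne[OF \<omega>] by auto
    obtain j where "dist (d j) y < r" using dense[OF r] by auto
    then have "X \<omega> \<inter> ball (d j) r \<noteq> {}" using y by auto
    from LeastI[of "\<lambda>j. X \<omega> \<inter> ball (d j) r \<noteq> {}", OF this] show ?thesis
      using False by (simp add: f0_def)
  qed (simp add: hit f0_def)
  obtain g where gm: "g \<in> borel_measurable M"
    and g: "\<And>\<omega>. \<omega> \<in> space M \<Longrightarrow> g \<omega> \<in> X \<omega> \<and> dist (g \<omega>) (d (f0 \<omega>)) \<le> 3 * r"
    using measurable_selection_near_start[OF dense closed eff f0m r start] by blast
  have "integrable M g" using integrable_selection_of_bounded[OF ib gm] g by blast
  then show ?thesis using that g sets.sets_into_space[OF A] by (force simp: f0_def)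
qed

lemma integrable_selection_exists:
  fixes X :: "'a \<Rightarrow> 'b::{banach, second_countable_topology} set"
  assumes "random_closed_set M X" and "integrably_bounded M X"
  obtains x where "x \<in> integrable_selections M X"
proof -
  obtain d :: "nat \<Rightarrow> 'b" where dense: "\<And>y r. 0 < r \<Longrightarrow> \<exists>k. dist (d k) y < r"
    using dense_sequence_exists by blast
  obtain x where "integrable M x" "\<And>\<omega>. \<omega> \<in> space M \<Longrightarrow> x \<omega> \<in> X \<omega>"
    using localized_integrable_selection[OF assms dense, of "{}" 1 0] by auto
  then show ?thesis using that unfolding integrable_selections_def by (auto intro: AE_I2)
qed

text \<open>If the Aumann integral is a singleton, any two integrable selections agree a.e.:
  gluing g and x along A yields a selection, so g - x integrates to 0 over every A.\<close>
lemma singleton_aumann_selections_ae_eq: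
  fixes X :: "'a \<Rightarrow> 'b::{banach, second_countable_topology} set"
  assumes "sigma_finite_measure M" and H: "aumann_integral M X = {a}"
    and x: "x \<in> integrable_selections M X" and g: "g \<in> integrable_selections M X"
  shows "AE \<omega> in M. g \<omega> = x \<omega>"
proof -
  have xi: "integrable M x" and xs: "AE \<omega> in M. x \<omega> \<in> X \<omega>"
    and gi: "integrable M g" and gs: "AE \<omega> in M. g \<omega> \<in> X \<omega>"
    using x g unfolding integrable_selections_def by auto
  have int_a: "integral\<^sup>L M h = a" if "h \<in> integrable_selections M X" for h
    using H that unfolding aumann_integral_def by blast
  have "AE \<omega> in M. g \<omega> - x \<omega> = 0"
  proof (rule sigma_finite_measure.density_zero[OF \<open>sigma_finite_measure M\<close>])
    show "integrable M (\<lambda>\<omega>. g \<omega> - x \<omega>)" using gi xi by simp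
    fix A assume "A \<in> sets M"
    define diffA where "diffA \<omega> = indicat_real A \<omega> *\<^sub>R (g \<omega> - x \<omega>)" for \<omega>
    have di: "integrable M diffA"
      unfolding diffA_def using gi xi \<open>A \<in> sets M\<close> by (intro integrable_mult_indicator) auto
    have "AE \<omega> in M. diffA \<omega> + x \<omega> \<in> X \<omega>"
      using gs xs by eventually_elim (auto simp: diffA_def indicator_def)
    then have "(\<lambda>\<omega>. diffA \<omega> + x \<omega>) \<in> integrable_selections M X"
      unfolding integrable_selections_def using di xi by auto
    then have "integral\<^sup>L M diffA + integral\<^sup>L M x = a" using int_a[of "\<lambda>\<omega>. diffA \<omega> + x \<omega>"] di xi by simp
    then show "set_lebesgue_integral M A (\<lambda>\<omega>. g \<omega> - x \<omega>) = 0"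
      using int_a[OF x] unfolding set_lebesgue_integral_def diffA_def by simp
  qed
  then show ?thesis by eventually_elim simp
qed

text \<open>If all integrable selections agree a.e. with x, then X = {x} a.e.  For a dense
  point d k and radius r, the set where X meets B(d k, r) while x is farther than 4r
  from d k carries a localized selection, which equals x a.e.; so it is null, and the
  countably many such sets exhaust every point of X other than x.\<close>
lemma ae_singleton_of_unique_selection:
  fixes X :: "'a \<Rightarrow> 'b::{banach, second_countable_topology} set"
  assumes X: "random_closed_set M X" and ib: "integrably_bounded M X"
    and x: "x \<in> borel_measurable M"
    and unique: "\<And>g. g \<in> integrable_selections M X \<Longrightarrow> AE \<omega> in M. g \<omega> = x \<omega>"
  shows "AE \<omega> in M. X \<omega> = {x \<omega>}"
proof -
  obtain d :: "nat \<Rightarrow> 'b" where dense: "\<And>y r. 0 < r \<Longrightarrow> \<exists>k. dist (d k) y < r"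
    using dense_sequence_exists by blast
  have eff: "effros_measurable M X" and ne: "\<And>\<omega>. \<omega> \<in> space M \<Longrightarrow> X \<omega> \<noteq> {}"
    using X unfolding random_closed_set_def by auto
  define bad where "bad k m = {\<omega>\<in>space M. X \<omega> \<inter> ball (d k) (1 / Suc m) \<noteq> {}
    \<and> 4 * (1 / Suc m) < dist (x \<omega>) (d k)}" for k m :: nat
  have bad_null: "AE \<omega> in M. \<omega> \<notin> bad k m" for k m
  proof -
    define r :: real where "r = 1 / Suc m"
    have "bad k m \<in> sets M"
      using effros_hit_measurable[OF eff, of "ball (d k) r"] x unfolding bad_def r_def pred_def
      by measurable
    then obtain g where gi: "integrable M g" and gs: "\<And>\<omega>. \<omega> \<in> space M \<Longrightarrow> g \<omega> \<in> X \<omega>"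
      and g_near: "\<And>\<omega>. \<omega> \<in> bad k m \<Longrightarrow> dist (g \<omega>) (d k) \<le> 3 * r"
      using localized_integrable_selection[OF X ib dense, of "bad k m" r k]
      unfolding r_def bad_def by auto
    have "g \<in> integrable_selections M X"
      unfolding integrable_selections_def using gi gs by (auto intro: AE_I2)
    from unique[OF this] show ?thesis
    proof eventually_elim
      case (elim \<omega>)
      show ?case
      proof
        assume "\<omega> \<in> bad k m"
        then have "4 * r < dist (g \<omega>) (d k)" using elim unfolding bad_def r_def by simp
        moreover have "0 < r" by (simp add: r_def)
        ultimately show False using g_near[OF \<open>\<omega> \<in> bad k m\<close>] by linarith
      qed
    qed
  qed
  have "AE \<omega> in M. \<forall>k m. \<omega> \<notin> bad k m"
    unfolding AE_all_countable using bad_null by blast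
  then show ?thesis
  proof (rule AE_mp, intro AE_I2 impI)
    fix \<omega> assume \<omega>: "\<omega> \<in> space M" and good: "\<forall>k m. \<omega> \<notin> bad k m"
    have "y = x \<omega>" if y: "y \<in> X \<omega>" for y
    proof (rule ccontr)
      assume "y \<noteq> x \<omega>"
      then have pos: "0 < dist y (x \<omega>) / 5" by simp
      from reals_Archimedean[OF pos] obtain m where m: "inverse (real (Suc m)) < dist y (x \<omega>) / 5" ..
      define r :: real where "r = 1 / Suc m"
      have "r = inverse (real (Suc m))" by (simp add: r_def divide_inverse)
      then have r: "0 < r" "5 * r < dist y (x \<omega>)" using m by simp_all
      obtain k where k: "dist (d k) y < r" using dense[OF r(1)] by blast
      have "dist y (x \<omega>) \<le> dist y (d k) + dist (d k) (x \<omega>)" by (rule dist_triangle)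
      then have "4 * r < dist (x \<omega>) (d k)" using k r by (simp add: dist_commute)
      moreover have "X \<omega> \<inter> ball (d k) r \<noteq> {}" using y k by auto
      ultimately have "\<omega> \<in> bad k m" using \<omega> unfolding bad_def r_def by simp
      then show False using good by blast
    qed
    then show "X \<omega> = {x \<omega>}" using ne[OF \<omega>] by blast
  qed
qed

lemma aumann_integral_ae_singleton:
  fixes X :: "'a \<Rightarrow> 'b::{banach, second_countable_topology} set"
  assumes xi: "integrable M x" and xX: "AE \<omega> in M. X \<omega> = {x \<omega>}"
  shows "aumann_integral M X = {integral\<^sup>L M x}"
proof -
  have "x \<in> integrable_selections M X"
    unfolding integrable_selections_def using xi xX by (auto elim: AE_mp)
  moreover have "integral\<^sup>L M y = integral\<^sup>L M x" if "y \<in> integrable_selections M X" for y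
  proof (rule integral_cong_AE)
    have "AE \<omega> in M. y \<omega> \<in> X \<omega>" using that unfolding integrable_selections_def by simp
    then show "AE \<omega> in M. y \<omega> = x \<omega>" using xX by eventually_elim auto
  qed (use that xi in \<open>auto simp: integrable_selections_def\<close>)
  ultimately show ?thesis unfolding aumann_integral_def by blast
qed

theorem proposition3p2:
  fixes M :: "'a measure"
    and X :: "'a \<Rightarrow> 'b::{banach, second_countable_topology} set"
    and a :: 'b
  assumes "finite_measure M"
    and "random_closed_set M X"
    and "integrably_bounded M X"
  shows "aumann_integral M X = {a} \<longleftrightarrow>
         (\<exists>x. integrable M x \<and> (AE \<omega> in M. X \<omega> = {x \<omega>}) \<and> integral\<^sup>L M x = a)"
proof
  assume H: "aumann_integral M X = {a}"
  have sf: "sigma_finite_measure M" using assms(1) unfolding finite_measure_def by blast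
  obtain x where x: "x \<in> integrable_selections M X"
    using integrable_selection_exists[OF assms(2,3)] .
  then have xi: "integrable M x" by (simp add: integrable_selections_def)
  have "integral\<^sup>L M x = a" using H x unfolding aumann_integral_def by blast
  moreover have "AE \<omega> in M. X \<omega> = {x \<omega>}"
    by (rule ae_singleton_of_unique_selection[OF assms(2,3) borel_measurable_integrable[OF xi]])
      (rule singleton_aumann_selections_ae_eq[OF sf H x])
  ultimately show "\<exists>x. integrable M x \<and> (AE \<omega> in M. X \<omega> = {x \<omega>}) \<and> integral\<^sup>L M x = a"
    using xi by blast
next
  assume "\<exists>x. integrable M x \<and> (AE \<omega> in M. X \<omega> = {x \<omega>}) \<and> integral\<^sup>L M x = a"
  then show "aumann_integral M X = {a}" using aumann_integral_ae_singleton by blast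
qed

end
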